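(* Consider the deletion-only Qerror function $\mathbb{Q}:2^{R_x}\to\mathbb{R}$, $$\mathbb{Q}(X)=\sum_{j=1}^M \mathbb{Q}_j(X),\qquad \mathbb{Q}_j(X)=\frac{C_j+1}{C_j+1-\sum_{t_i\in X} w_{ij}}.$$ Then $\mathbb{Q}$ is supermodular: for all $A,B\subseteq R_x$, $$\mathbb{Q}(A\cup B)+\mathbb{Q}(A\cap B)\ \ge\ \mathbb{Q}(A)+\mathbb{Q}(B).$$
   Context: Setting: $R_x=\{t_1,\dots,t_N\}$ is a finite set of tuples and there are $M$ queries. The joint weights $w_{ij}\in\mathbb{Z}_{\ge0}$ satisfy $C_j=\sum_{i=1}^N w_{ij}$ for each $j$. For $X\subseteq R_x$, $\mathbb{Q}(X)$ is the total Qerror when exactly the tuples in $X$ are deleted. *)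

theory Defs
  imports Main Complex_Main
begin

text \<open>Tuples t_1..t_N are identified with indices {1..N}; queries with {1..M}.
  w i j is the joint weight of tuple i in query j; C_j = sum over all tuples.\<close>

definition Ccnt :: "nat \<Rightarrow> (nat \<Rightarrow> nat \<Rightarrow> nat) \<Rightarrow> nat \<Rightarrow> nat" where
  "Ccnt N w j = (\<Sum>i\<in>{1..N}. w i j)"

definition Qj :: "nat \<Rightarrow> (nat \<Rightarrow> nat \<Rightarrow> nat) \<Rightarrow> nat \<Rightarrow> nat set \<Rightarrow> real" where
  "Qj N w j X = (real (Ccnt N w j) + 1) /
      (real (Ccnt N w j) + 1 - (\<Sum>i\<in>X. real (w i j)))"

definition Qerr :: "nat \<Rightarrow> nat \<Rightarrow> (nat \<Rightarrow> nat \<Rightarrow> nat) \<Rightarrow> nat set \<Rightarrow> real" where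
  "Qerr N M w X = (\<Sum>j\<in>{1..M}. Qj N w j X)"

end

theory Submission
  imports Defs
begin

text \<open>Each summand has the form \<open>c / (c - m X)\<close> with \<open>m\<close> a nonnegative modular set function,
  and \<open>t \<mapsto> c / (c - t)\<close> is convex on \<open>t < c\<close>. A convex function of a nonnegative
  modular function has increasing differences: adding the weight of \<open>B - A\<close> raises the value
  more when it is added on top of \<open>A\<close> than on top of \<open>A \<inter> B\<close>. The bound \<open>m X \<le> C\<^sub>j < C\<^sub>j + 1\<close>
  keeps every denominator positive.\<close>

lemma inverse_diff_increasing_differences:
  fixes a b d :: real
  assumes "0 \<le> a" and "0 \<le> b" and "a + b < d"
  shows "1 / (d - a) + 1 / (d - b) \<le> 1 / (d - (a + b)) + 1 / d"
proof -
  have pos: "d - (a + b) > 0" "d - a > 0" "d - b > 0" "d > 0"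
    using assms by auto
  have "(d - (a + b)) * (d - b) \<le> (d - a) * d"
  proof -
    have "(d - a) * d - (d - (a + b)) * (d - b) = b * (2 * d - a - b)"
      by (simp add: algebra_simps)
    moreover have "b * (2 * d - a - b) \<ge> 0"
      using assms by simp
    ultimately show ?thesis by simp
  qed
  then have "a / ((d - a) * d) \<le> a / ((d - (a + b)) * (d - b))"
    using assms(1) pos by (intro divide_left_mono mult_pos_pos) auto
  moreover have "1 / (d - a) - 1 / d = a / ((d - a) * d)"
    using pos by (simp add: field_simps)
  moreover have "1 / (d - (a + b)) - 1 / (d - b) = a / ((d - (a + b)) * (d - b))"
    using pos by (simp add: field_simps)
  ultimately show ?thesis by linarith
qed

lemma sum_weights_le_Ccnt:
  assumes "X \<subseteq> {1..N}"
  shows "(\<Sum>i\<in>X. real (w i j)) \<le> real (Ccnt N w j)"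
proof -
  have "(\<Sum>i\<in>X. real (w i j)) \<le> (\<Sum>i\<in>{1..N}. real (w i j))"
    using assms by (intro sum_mono2) auto
  then show ?thesis
    by (simp add: Ccnt_def)
qed

lemma Qj_supermodular:
  assumes "A \<subseteq> {1..N}" and "B \<subseteq> {1..N}"
  shows "Qj N w j A + Qj N w j B \<le> Qj N w j (A \<union> B) + Qj N w j (A \<inter> B)"
proof -
  define s where "s X = (\<Sum>i\<in>X. real (w i j))" for X
  define c where "c = real (Ccnt N w j) + 1"
  define a where "a = s A - s (A \<inter> B)"
  define b where "b = s B - s (A \<inter> B)"
  have fin: "finite A" "finite B"
    using assms finite_subset by blast+
  have s_mono: "s Y \<le> s X" if "Y \<subseteq> X" "finite X" for X Y
    using that unfolding s_def by (intro sum_mono2) auto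
  have "0 \<le> a" "0 \<le> b"
    using fin s_mono unfolding a_def b_def by auto
  moreover have s_union: "s (A \<union> B) = s (A \<inter> B) + (a + b)"
    using sum.union_inter[OF fin, of "\<lambda>i. real (w i j)"]
    unfolding s_def a_def b_def by simp
  moreover have "s (A \<union> B) < c"
    using sum_weights_le_Ccnt[of "A \<union> B" N w j] assms unfolding s_def c_def by simp
  ultimately have increasing_differences:
    "1 / (c - s (A \<inter> B) - a) + 1 / (c - s (A \<inter> B) - b)
      \<le> 1 / (c - s (A \<inter> B) - (a + b)) + 1 / (c - s (A \<inter> B))"
    using inverse_diff_increasing_differences[of a b "c - s (A \<inter> B)"] by simp
  have denominators: "c - s (A \<inter> B) - a = c - s A" "c - s (A \<inter> B) - b = c - s B"
    "c - s (A \<inter> B) - (a + b) = c - s (A \<union> B)"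
    using s_union unfolding a_def b_def by simp_all
  have "c * (1 / (c - s A) + 1 / (c - s B))
      \<le> c * (1 / (c - s (A \<union> B)) + 1 / (c - s (A \<inter> B)))"
    using increasing_differences unfolding denominators
    by (intro mult_left_mono) (auto simp: c_def)
  then show ?thesis
    unfolding Qj_def s_def c_def by (simp add: distrib_left)
qed

theorem theorem4p1:
  fixes N M :: nat and w :: "nat \<Rightarrow> nat \<Rightarrow> nat" and A B :: "nat set"
  assumes "A \<subseteq> {1..N}" and "B \<subseteq> {1..N}"
  shows "Qerr N M w (A \<union> B) + Qerr N M w (A \<inter> B) \<ge> Qerr N M w A + Qerr N M w B"
  unfolding Qerr_def sum.distrib[symmetric]
  by (intro sum_mono Qj_supermodular[OF assms])

end
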